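(* Let $Q(y)$ and $R(y)$ be probability distributions on the set of one-hot vectors $\{0,1\}^k\cap\Delta^{k-1}$. Let $\mathcal{P}_c[Q]$ denote the set of probability distributions $P(c)$ on $\Delta^{k-1}$ such that, for $c\sim P$, the one-hot vector $e_{\arg\max_j c_j}$ has distribution $Q$. Then $$\inf_{P(c)\in\mathcal{P}_c[Q]}W_\infty\bigl(P(c),R(y)\bigr)=0.5\,W_\infty\bigl(Q(y),R(y)\bigr).$$
   Context: $\Delta^{k-1}=\{c\in\mathbb{R}^k: c_j\ge 0,\ \sum_j c_j=1\}$; $e_i$ is the $i$-th standard basis vector. For probability distributions $P,Q$ on $\mathbb{R}^k$, $W_\infty(P,Q)=\inf_{\pi\in\Pi(P,Q)}\int\|u-v\|_\infty\,d\pi(u,v)$ over couplings $\pi$ of $P$ and $Q$ (optimal transport distance with ground cost $\|u-v\|_\infty$). Ties in $\arg\max$ are broken by a fixed rule (e.g. smallest index). (In the paper, $Q$ is the pseudo-label distribution $P_{\mathrm{pseudo}}(y)$ and $R$ is the target label distribution $P_T(y)$.) *)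

theory Defs
  imports "HOL-Probability.Probability"
begin

text \<open>Vectors in R^k are rendered as real^'k with a finite, well-ordered index type 'k
  (the well-order provides the fixed tie-breaking rule: smallest index).\<close>

definition prob_simplex :: "(real ^ 'k::finite) set" where
  "prob_simplex = {c. (\<forall>i. 0 \<le> c $ i) \<and> (\<Sum>i\<in>UNIV. c $ i) = 1}"

definition onehots :: "(real ^ 'k::finite) set" where
  "onehots = {axis i 1 | i. True}"

definition argmax_idx :: "real ^ 'k::{finite,wellorder} \<Rightarrow> 'k" where
  "argmax_idx c = (LEAST i. \<forall>j. c $ j \<le> c $ i)"

definition onehot_of :: "real ^ 'k::{finite,wellorder} \<Rightarrow> real ^ 'k::{finite,wellorder}" where
  "onehot_of c = axis (argmax_idx c) 1"

definition distr_on :: "(real ^ 'k::finite) set \<Rightarrow> (real ^ 'k) measure \<Rightarrow> bool" where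
  "distr_on S P \<longleftrightarrow> prob_space P \<and> sets P = sets borel \<and> S \<in> sets borel \<and> emeasure P S = 1"

definition couplings :: "(real ^ 'k::finite) measure \<Rightarrow> (real ^ 'k) measure
    \<Rightarrow> ((real ^ 'k) \<times> (real ^ 'k)) measure set" where
  "couplings P Q = {\<pi>. prob_space \<pi> \<and> sets \<pi> = sets (borel \<Otimes>\<^sub>M borel)
      \<and> distr \<pi> borel fst = P \<and> distr \<pi> borel snd = Q}"

definition W_inf :: "(real ^ 'k::finite) measure \<Rightarrow> (real ^ 'k) measure \<Rightarrow> real" where
  "W_inf P Q = Inf {(\<integral>uv. infnorm (fst uv - snd uv) \<partial>\<pi>) | \<pi>. \<pi> \<in> couplings P Q}"

definition Pc :: "(real ^ 'k::{finite,wellorder}) measure \<Rightarrow> (real ^ 'k::{finite,wellorder}) measure set" where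
  "Pc Q = {P. distr_on prob_simplex P \<and> distr P borel onehot_of = Q}"

end

(* Rounding a point c of the simplex to the one-hot vector of its argmax at most doubles its
   sup-distance to any one-hot y: if the argmax misses the coordinate j of y, then c_j <= 1/2,
   so c is already 1/2 away from y, while two one-hot vectors are at distance at most 1.
   Pushing a coupling of P and R forward along the rounding gives W(Q,R) <= 2 W(P,R).
   Conversely, for a coupling of Q and R and 1/2 < t <= 1, the map (x, y) |-> t x + (1 - t) y
   keeps x as the argmax and lands at distance t |x - y| from y, so its image law lies in
   P_c[Q] and the infimum is at most t W(Q,R) for every t > 1/2. *)
theory Submission
  imports Defs
begin

lemma argmax_idx_eq_iff:
  fixes c :: "real ^ 'k::{finite,wellorder}"
  shows "argmax_idx c = i \<longleftrightarrow> (\<forall>j. c $ j \<le> c $ i) \<and> (\<forall>j<i. c $ j < c $ i)"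
proof
  assume i: "argmax_idx c = i"
  obtain m where "\<forall>j. c $ j \<le> c $ m"
    using Max_ge[of "range (($) c)"] Max_in[of "range (($) c)"] by fastforce
  then have max: "\<forall>j. c $ j \<le> c $ i"
    unfolding i[symmetric] argmax_idx_def by (rule LeastI)
  have "c $ j < c $ i" if "j < i" for j
  proof (rule ccontr)
    assume "\<not> c $ j < c $ i"
    with max have "\<forall>l. c $ l \<le> c $ j" by (meson not_less order_trans)
    then have "i \<le> j" unfolding i[symmetric] argmax_idx_def by (rule Least_le)
    with \<open>j < i\<close> show False by simp
  qed
  with max show "(\<forall>j. c $ j \<le> c $ i) \<and> (\<forall>j<i. c $ j < c $ i)" by blast
next
  assume "(\<forall>j. c $ j \<le> c $ i) \<and> (\<forall>j<i. c $ j < c $ i)"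
  then show "argmax_idx c = i"
    unfolding argmax_idx_def by (intro Least_equality) (auto simp: not_le[symmetric])
qed

lemma argmax_idx_max: "c $ j \<le> c $ argmax_idx (c :: real ^ 'k::{finite,wellorder})"
  using argmax_idx_eq_iff by blast

lemma argmax_idx_eqI:
  fixes c :: "real ^ 'k::{finite,wellorder}"
  assumes "\<And>j. j \<noteq> i \<Longrightarrow> c $ j < c $ i"
  shows "argmax_idx c = i"
  using assms by (subst argmax_idx_eq_iff) (metis less_imp_le order_less_irrefl order_refl)

lemma measurable_argmax_idx [measurable]:
  "argmax_idx \<in> measurable (borel :: (real ^ 'k::{finite,wellorder}) measure) (count_space UNIV)"
proof -
  have "argmax_idx -` {i} =
      {c :: real ^ 'k::{finite,wellorder}. (\<forall>j. c $ j \<le> c $ i) \<and> (\<forall>j<i. c $ j < c $ i)}" for i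
    using argmax_idx_eq_iff by blast
  then have "argmax_idx -` {i} \<in> sets (borel :: (real ^ 'k::{finite,wellorder}) measure)" for i
    by (simp only:) measurable
  then show ?thesis by (simp add: measurable_count_space_eq2)
qed

lemma borel_measurable_onehot_of [measurable]:
  "onehot_of \<in> borel_measurable (borel :: (real ^ 'k::{finite,wellorder}) measure)"
  unfolding onehot_of_def[abs_def] by measurable

lemma infnorm_le_cartI: "(\<And>i. \<bar>x $ i\<bar> \<le> B) \<Longrightarrow> infnorm (x :: real ^ 'n) \<le> B"
  unfolding infnorm_cart by (rule cSup_least) auto

lemma onehots_iff: "y \<in> onehots \<longleftrightarrow> (\<exists>i. y = axis i (1 :: real))"
  unfolding onehots_def by auto

lemma prob_simplex_sum_le_1:
  assumes "c \<in> prob_simplex"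
  shows "(\<Sum>i\<in>A. c $ i) \<le> 1"
proof -
  have "(\<Sum>i\<in>A. c $ i) \<le> (\<Sum>i\<in>UNIV. c $ i)"
    using assms unfolding prob_simplex_def by (intro sum_mono2) auto
  with assms show ?thesis unfolding prob_simplex_def by simp
qed

lemma onehots_subset_prob_simplex: "onehots \<subseteq> prob_simplex"
  by (auto simp: onehots_iff prob_simplex_def axis_def)

lemma convex_prob_simplex: "convex prob_simplex"
  unfolding convex_def prob_simplex_def
  by (simp add: sum.distrib flip: sum_distrib_left)

lemma infnorm_diff_prob_simplex_le_1:
  assumes "c \<in> prob_simplex" and "d \<in> prob_simplex"
  shows "infnorm (c - d) \<le> 1"
proof (rule infnorm_le_cartI)
  fix i
  have "c $ i \<le> 1" "d $ i \<le> 1"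
    using prob_simplex_sum_le_1[of _ "{i}"] assms by auto
  moreover have "0 \<le> c $ i" "0 \<le> d $ i"
    using assms unfolding prob_simplex_def by auto
  ultimately show "\<bar>(c - d) $ i\<bar> \<le> 1" by simp
qed

lemma infnorm_onehot_of_diff_le:
  fixes c :: "real ^ 'k::{finite,wellorder}"
  assumes c: "c \<in> prob_simplex" and y: "y \<in> onehots"
  shows "infnorm (onehot_of c - y) \<le> 2 * infnorm (c - y)"
proof -
  obtain j where y_eq: "y = axis j 1" using y by (auto simp: onehots_iff)
  let ?i = "argmax_idx c"
  show ?thesis
  proof (cases "?i = j")
    case True
    then show ?thesis by (simp add: onehot_of_def y_eq infnorm_0 infnorm_pos_le)
  next
    case False
    have "c $ ?i + c $ j \<le> 1"
      using prob_simplex_sum_le_1[OF c, of "{?i, j}"] False by simp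
    with argmax_idx_max[of c j] have "1/2 \<le> \<bar>(c - y) $ j\<bar>"
      by (simp add: y_eq)
    also have "\<dots> \<le> infnorm (c - y)" by (rule component_le_infnorm_cart)
    finally have "1 \<le> 2 * infnorm (c - y)" by simp
    moreover have "infnorm (onehot_of c - y) \<le> 1"
      by (intro infnorm_diff_prob_simplex_le_1 subsetD[OF onehots_subset_prob_simplex])
        (auto simp: onehot_of_def onehots_iff y_eq)
    ultimately show ?thesis by simp
  qed
qed

lemma onehot_of_mixture:
  fixes x y :: "real ^ 'k::{finite,wellorder}"
  assumes x: "x \<in> onehots" and y: "y \<in> onehots" and t: "1/2 < t"
  shows "onehot_of (t *\<^sub>R x + (1 - t) *\<^sub>R y) = x"
proof -
  obtain i j where "x = axis i 1" "y = axis j 1" using x y by (auto simp: onehots_iff)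
  moreover from this have "argmax_idx (t *\<^sub>R x + (1 - t) *\<^sub>R y) = i"
    using t by (intro argmax_idx_eqI) (auto simp: axis_def)
  ultimately show ?thesis by (simp add: onehot_of_def)
qed

lemma sets_prob_simplex [measurable]: "prob_simplex \<in> sets (borel :: (real ^ 'k::finite) measure)"
  unfolding prob_simplex_def by measurable

lemma distr_on_iff_AE:
  "distr_on S P \<longleftrightarrow> prob_space P \<and> sets P = sets borel \<and> S \<in> sets borel \<and> (AE x in P. x \<in> S)"
proof -
  have "emeasure P S = 1 \<longleftrightarrow> (AE x in P. x \<in> S)" if "prob_space P" "S \<in> sets P"
  proof -
    interpret prob_space P by fact
    show ?thesis using that(2) by (simp add: AE_in_set_eq_1 emeasure_eq_measure)
  qed
  then show ?thesis unfolding distr_on_def by auto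
qed

lemma distr_on_mono: "distr_on S P \<Longrightarrow> S \<subseteq> T \<Longrightarrow> T \<in> sets borel \<Longrightarrow> distr_on T P"
  unfolding distr_on_iff_AE by (auto elim: AE_mp)

lemma distr_on_distr:
  assumes "prob_space M" and "f \<in> borel_measurable M" and "S \<in> sets borel"
    and "AE x in M. f x \<in> S"
  shows "distr_on S (distr M borel f)"
  using assms by (simp add: distr_on_iff_AE prob_space.prob_space_distr AE_distr_iff)

lemma measurable_coupling: "\<pi> \<in> couplings P R \<Longrightarrow> measurable \<pi> N = measurable (borel \<Otimes>\<^sub>M borel) N"
  unfolding couplings_def by (auto intro: measurable_cong_sets)

lemma AE_coupling_fst:
  assumes "\<pi> \<in> couplings P R" and "distr_on S P"
  shows "AE z in \<pi>. fst z \<in> S"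
proof -
  have "AE x in distr \<pi> borel fst. x \<in> S"
    using assms unfolding couplings_def distr_on_iff_AE by auto
  moreover have "fst \<in> measurable \<pi> borel" using assms(1) by (simp add: measurable_coupling)
  ultimately show ?thesis by (auto dest: AE_distrD)
qed

lemma AE_coupling_snd:
  assumes "\<pi> \<in> couplings P R" and "distr_on S R"
  shows "AE z in \<pi>. snd z \<in> S"
proof -
  have "AE x in distr \<pi> borel snd. x \<in> S"
    using assms unfolding couplings_def distr_on_iff_AE by auto
  moreover have "snd \<in> measurable \<pi> borel" using assms(1) by (simp add: measurable_coupling)
  ultimately show ?thesis by (auto dest: AE_distrD)
qed

lemma (in pair_prob_space) distr_pair_snd: "distr (M1 \<Otimes>\<^sub>M M2) M2 snd = M2"
proof (intro measure_eqI)
  fix A assume A: "A \<in> sets (distr (M1 \<Otimes>\<^sub>M M2) M2 snd)"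
  then have "emeasure (distr (M1 \<Otimes>\<^sub>M M2) M2 snd) A = emeasure (M1 \<Otimes>\<^sub>M M2) (space M1 \<times> A)"
    by (auto simp: emeasure_distr space_pair_measure dest: sets.sets_into_space
        intro!: arg_cong2[where f=emeasure])
  with A show "emeasure (distr (M1 \<Otimes>\<^sub>M M2) M2 snd) A = emeasure M2 A"
    by (simp add: M2.emeasure_pair_measure_Times M1.emeasure_space_1)
qed simp

lemma pair_measure_in_couplings:
  assumes "distr_on S P" and "distr_on T R"
  shows "P \<Otimes>\<^sub>M R \<in> couplings P R"
proof -
  have P: "prob_space P" "sets P = sets borel" and R: "prob_space R" "sets R = sets borel"
    using assms unfolding distr_on_def by auto
  interpret pair_prob_space P R
    using P R by (simp add: pair_prob_space_def pair_sigma_finite_def prob_space_imp_sigma_finite)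
  show ?thesis unfolding couplings_def
  proof (intro CollectI conjI)
    show "prob_space (P \<Otimes>\<^sub>M R)" by (rule prob_space_axioms)
    show "sets (P \<Otimes>\<^sub>M R) = sets (borel \<Otimes>\<^sub>M borel)"
      using P R by (intro sets_pair_measure_cong)
    have "distr (P \<Otimes>\<^sub>M R) borel fst = distr (P \<Otimes>\<^sub>M R) P fst"
      using P by (intro distr_cong) auto
    then show "distr (P \<Otimes>\<^sub>M R) borel fst = P" by (simp only: M2.distr_pair_fst)
    have "distr (P \<Otimes>\<^sub>M R) borel snd = distr (P \<Otimes>\<^sub>M R) R snd"
      using R by (intro distr_cong) auto
    then show "distr (P \<Otimes>\<^sub>M R) borel snd = R" by (simp only: distr_pair_snd)
  qed
qed

lemma distr_Pair_snd_in_couplings: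
  assumes \<pi>: "\<pi> \<in> couplings P R" and g: "g \<in> borel_measurable (borel \<Otimes>\<^sub>M borel)"
  shows "distr \<pi> (borel \<Otimes>\<^sub>M borel) (\<lambda>z. (g z, snd z)) \<in> couplings (distr \<pi> borel g) R"
proof -
  have \<pi>': "prob_space \<pi>" "distr \<pi> borel snd = R"
    using \<pi> unfolding couplings_def by auto
  have h: "(\<lambda>z. (g z, snd z)) \<in> measurable \<pi> (borel \<Otimes>\<^sub>M borel)"
    using \<pi> g by (simp add: measurable_coupling)
  show ?thesis unfolding couplings_def
  proof (intro CollectI conjI)
    show "prob_space (distr \<pi> (borel \<Otimes>\<^sub>M borel) (\<lambda>z. (g z, snd z)))"
      by (rule prob_space.prob_space_distr[OF \<pi>'(1) h])
    show "distr (distr \<pi> (borel \<Otimes>\<^sub>M borel) (\<lambda>z. (g z, snd z))) borel fst = distr \<pi> borel g"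
      using h by (simp add: distr_distr comp_def)
    show "distr (distr \<pi> (borel \<Otimes>\<^sub>M borel) (\<lambda>z. (g z, snd z))) borel snd = R"
      using h \<pi>' by (simp add: distr_distr comp_def)
  qed simp
qed

lemma borel_measurable_infnorm_diff [measurable]:
  "(\<lambda>uv. infnorm (fst uv - snd uv))
    \<in> borel_measurable (borel \<Otimes>\<^sub>M borel :: ('a::euclidean_space \<times> 'a) measure)"
  unfolding borel_prod by (intro borel_measurable_continuous_onI continuous_intros)

lemma W_inf_le_integral:
  assumes "\<pi> \<in> couplings P R"
  shows "W_inf P R \<le> (\<integral>uv. infnorm (fst uv - snd uv) \<partial>\<pi>)"
  unfolding W_inf_def using assms
  by (intro cInf_lower bdd_belowI[of _ 0]) (auto simp: infnorm_pos_le)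

lemma W_inf_greatest:
  assumes "couplings P R \<noteq> {}"
    and "\<And>\<pi>. \<pi> \<in> couplings P R \<Longrightarrow> B \<le> (\<integral>uv. infnorm (fst uv - snd uv) \<partial>\<pi>)"
  shows "B \<le> W_inf P R"
  unfolding W_inf_def using assms by (intro cInf_greatest) auto

lemma W_inf_distr_le:
  assumes \<pi>: "\<pi> \<in> couplings P R" and g: "g \<in> borel_measurable (borel \<Otimes>\<^sub>M borel)"
  shows "W_inf (distr \<pi> borel g) R \<le> (\<integral>z. infnorm (g z - snd z) \<partial>\<pi>)"
proof -
  have "W_inf (distr \<pi> borel g) R
      \<le> (\<integral>uv. infnorm (fst uv - snd uv) \<partial>distr \<pi> (borel \<Otimes>\<^sub>M borel) (\<lambda>z. (g z, snd z)))"
    by (rule W_inf_le_integral[OF distr_Pair_snd_in_couplings[OF assms]])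
  also have "\<dots> = (\<integral>z. infnorm (g z - snd z) \<partial>\<pi>)"
    using assms by (subst integral_distr) (auto simp: measurable_coupling)
  finally show ?thesis .
qed

lemma integrable_infnorm_coupling:
  assumes \<pi>: "\<pi> \<in> couplings P R"
    and "distr_on prob_simplex P" and "distr_on prob_simplex R"
  shows "integrable \<pi> (\<lambda>z. infnorm (fst z - snd z))"
proof -
  interpret prob_space \<pi> using \<pi> unfolding couplings_def by auto
  show ?thesis
  proof (rule integrable_const_bound[where B=1])
    show "AE z in \<pi>. norm (infnorm (fst z - snd z)) \<le> 1"
      using AE_coupling_fst[OF \<pi> assms(2)] AE_coupling_snd[OF \<pi> assms(3)]
      by eventually_elim (simp add: infnorm_pos_le infnorm_diff_prob_simplex_le_1)
    show "(\<lambda>z. infnorm (fst z - snd z)) \<in> borel_measurable \<pi>"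
      using \<pi> by (simp add: measurable_coupling)
  qed
qed

lemma W_inf_le_twice_W_inf_Pc:
  fixes P Q R :: "(real ^ 'k::{finite,wellorder}) measure"
  assumes R: "distr_on onehots R" and P: "P \<in> Pc Q"
  shows "W_inf Q R \<le> 2 * W_inf P R"
proof -
  have P_simplex: "distr_on prob_simplex P" and P_Q: "distr P borel onehot_of = Q"
    using P unfolding Pc_def by auto
  have R_simplex: "distr_on prob_simplex R"
    using R onehots_subset_prob_simplex by (rule distr_on_mono) simp
  have "W_inf Q R / 2 \<le> W_inf P R"
  proof (rule W_inf_greatest)
    show "couplings P R \<noteq> {}" using pair_measure_in_couplings[OF P_simplex R] by blast
    fix \<pi> assume \<pi>: "\<pi> \<in> couplings P R"
    have fst_P: "distr \<pi> borel fst = P" and [measurable]: "fst \<in> borel_measurable \<pi>"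
      using \<pi> unfolding couplings_def by (auto simp: measurable_coupling[OF \<pi>])
    have "distr \<pi> borel (\<lambda>z. onehot_of (fst z)) = Q"
      using distr_distr[of onehot_of borel borel fst \<pi>] by (simp add: comp_def fst_P P_Q)
    then have "W_inf Q R \<le> (\<integral>z. infnorm (onehot_of (fst z) - snd z) \<partial>\<pi>)"
      using W_inf_distr_le[OF \<pi>, of "\<lambda>z. onehot_of (fst z)"] by simp
    also have "\<dots> \<le> (\<integral>z. 2 * infnorm (fst z - snd z) \<partial>\<pi>)"
    proof (rule integral_mono_AE')
      show "integrable \<pi> (\<lambda>z. 2 * infnorm (fst z - snd z))"
        using integrable_infnorm_coupling[OF \<pi> P_simplex R_simplex] by simp
      show "AE z in \<pi>. infnorm (onehot_of (fst z) - snd z) \<le> 2 * infnorm (fst z - snd z)"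
        using AE_coupling_fst[OF \<pi> P_simplex] AE_coupling_snd[OF \<pi> R]
        by eventually_elim (rule infnorm_onehot_of_diff_le)
    qed (simp add: infnorm_pos_le)
    finally show "W_inf Q R / 2 \<le> (\<integral>z. infnorm (fst z - snd z) \<partial>\<pi>)" by simp
  qed
  then show ?thesis by simp
qed

lemma mixture_in_Pc:
  fixes Q R :: "(real ^ 'k::{finite,wellorder}) measure"
  assumes Q: "distr_on onehots Q" and R: "distr_on onehots R" and \<sigma>: "\<sigma> \<in> couplings Q R"
    and t: "1/2 < t" "t \<le> 1"
  shows "distr \<sigma> borel (\<lambda>z. t *\<^sub>R fst z + (1 - t) *\<^sub>R snd z) \<in> Pc Q"
proof -
  define g where "g z = t *\<^sub>R fst z + (1 - t) *\<^sub>R snd z"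
    for z :: "(real ^ 'k::{finite,wellorder}) \<times> (real ^ 'k::{finite,wellorder})"
  have \<sigma>_prob: "prob_space \<sigma>" and fst_Q: "distr \<sigma> borel fst = Q"
    using \<sigma> unfolding couplings_def by auto
  have [measurable]: "g \<in> borel_measurable \<sigma>" "fst \<in> borel_measurable \<sigma>"
    using \<sigma> by (simp_all add: measurable_coupling g_def[abs_def])
  have onehots: "AE z in \<sigma>. fst z \<in> onehots \<and> snd z \<in> onehots"
    using AE_coupling_fst[OF \<sigma> Q] AE_coupling_snd[OF \<sigma> R] by eventually_elim simp
  have "distr_on prob_simplex (distr \<sigma> borel g)"
  proof (rule distr_on_distr[OF \<sigma>_prob])
    show "AE z in \<sigma>. g z \<in> prob_simplex"
      using onehots by eventually_elim
        (use t onehots_subset_prob_simplex in \<open>auto simp: g_def intro!: convexD[OF convex_prob_simplex]\<close>)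
  qed auto
  moreover have "distr (distr \<sigma> borel g) borel onehot_of = Q"
  proof -
    have "distr (distr \<sigma> borel g) borel onehot_of = distr \<sigma> borel (onehot_of \<circ> g)"
      by (simp add: distr_distr)
    also have "\<dots> = distr \<sigma> borel fst"
      by (intro distr_cong_AE) (use onehots t in \<open>auto simp: g_def onehot_of_mixture\<close>)
    finally show ?thesis by (simp add: fst_Q)
  qed
  ultimately show ?thesis unfolding Pc_def g_def by simp
qed

lemma W_inf_mixture_le:
  fixes Q R :: "(real ^ 'k::finite) measure"
  assumes \<sigma>: "\<sigma> \<in> couplings Q R" and t: "0 \<le> t"
  shows "W_inf (distr \<sigma> borel (\<lambda>z. t *\<^sub>R fst z + (1 - t) *\<^sub>R snd z)) R
    \<le> t * (\<integral>z. infnorm (fst z - snd z) \<partial>\<sigma>)"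
proof -
  have shift: "t *\<^sub>R x + (1 - t) *\<^sub>R y - y = t *\<^sub>R (x - y)" for x y :: "real ^ 'k::finite"
    by (simp add: algebra_simps)
  have "infnorm (t *\<^sub>R x + (1 - t) *\<^sub>R y - y) = t * infnorm (x - y)" for x y :: "real ^ 'k::finite"
    unfolding shift infnorm_mul using t by simp
  then show ?thesis
    using W_inf_distr_le[OF \<sigma>, of "\<lambda>z. t *\<^sub>R fst z + (1 - t) *\<^sub>R snd z"] by simp
qed

lemma Inf_W_inf_Pc_le:
  fixes Q R :: "(real ^ 'k::{finite,wellorder}) measure"
  assumes Q: "distr_on onehots Q" and R: "distr_on onehots R" and t: "1/2 < t" "t \<le> 1"
  shows "Inf {W_inf P R | P. P \<in> Pc Q} \<le> t * W_inf Q R"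
proof -
  let ?S = "{W_inf P R | P. P \<in> Pc Q}"
  have "bdd_below ?S"
    using W_inf_le_twice_W_inf_Pc[OF R] by (intro bdd_belowI[of _ "W_inf Q R / 2"]) fastforce
  have "Inf ?S / t \<le> W_inf Q R"
  proof (rule W_inf_greatest)
    show "couplings Q R \<noteq> {}" using pair_measure_in_couplings[OF Q R] by blast
    fix \<sigma> assume \<sigma>: "\<sigma> \<in> couplings Q R"
    have "Inf ?S \<le> W_inf (distr \<sigma> borel (\<lambda>z. t *\<^sub>R fst z + (1 - t) *\<^sub>R snd z)) R"
      using mixture_in_Pc[OF Q R \<sigma> t] \<open>bdd_below ?S\<close> by (auto intro: cInf_lower)
    also have "\<dots> \<le> t * (\<integral>z. infnorm (fst z - snd z) \<partial>\<sigma>)"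
      using W_inf_mixture_le[OF \<sigma>] t by simp
    finally show "Inf ?S / t \<le> (\<integral>z. infnorm (fst z - snd z) \<partial>\<sigma>)"
      using t by (simp add: divide_le_eq mult.commute)
  qed
  then show ?thesis using t by (simp add: divide_le_eq mult.commute)
qed

theorem mainTheorem5:
  fixes Q R :: "(real ^ 'k::{finite,wellorder}) measure"
  assumes "distr_on onehots Q" and "distr_on onehots R"
  shows "Inf {W_inf P R | P. P \<in> Pc Q} = 0.5 * W_inf Q R"
proof -
  note Q = assms(1) and R = assms(2)
  define S where "S = {W_inf P R | P. P \<in> Pc Q}"
  have "S \<noteq> {}"
    using mixture_in_Pc[OF Q R pair_measure_in_couplings[OF Q R], of 1] by (auto simp: S_def)
  then have "W_inf Q R / 2 \<le> Inf S"
    using W_inf_le_twice_W_inf_Pc[OF R] by (intro cInf_greatest) (auto simp: S_def mult.commute)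
  moreover have "Inf S \<le> W_inf Q R / 2"
  proof (rule tendsto_lowerbound)
    show "((\<lambda>t. t * W_inf Q R) \<longlongrightarrow> W_inf Q R / 2) (at_right (1/2))"
      by (auto intro!: tendsto_eq_intros)
    show "\<forall>\<^sub>F t in at_right (1/2). Inf S \<le> t * W_inf Q R"
      unfolding eventually_at_right_field S_def using Inf_W_inf_Pc_le[OF Q R]
      by (intro exI[of _ 1]) auto
  qed simp
  ultimately show ?thesis unfolding S_def by simp
qed

end
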